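(* For every positive integer $n$, $$\sum_{\lambda \in \mathcal{H}_n} t^{\mathrm{rep}(\lambda)} = \sum_{\lambda \in \mathcal{H}_n} t^{\mathrm{even}(\lambda)}$$ as polynomials in $t$.
   Context: A partition is a finite nonempty weakly decreasing sequence $\lambda=(\lambda_1,\ldots,\lambda_k)$ of positive integers; $\ell(\lambda)=k$ is its number of parts. The perimeter of $\lambda$ is $\Gamma(\lambda)=\lambda_1+\ell(\lambda)-1$, and $\mathcal{H}_n$ is the (finite) set of partitions with perimeter $n$. For a partition $\lambda$, $\mathrm{rep}(\lambda)=|\{1\le i\le \ell(\lambda)-1:\lambda_i=\lambda_{i+1}\}|$ and $\mathrm{even}(\lambda)=|\{1\le i\le \ell(\lambda): \lambda_i \text{ is even}\}|$. *)

theory Defs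
  imports "HOL-Computational_Algebra.Polynomial"
begin

definition is_partition :: "nat list \<Rightarrow> bool" where
  "is_partition lam \<longleftrightarrow> lam \<noteq> [] \<and> sorted_wrt (\<ge>) lam \<and> (\<forall>x\<in>set lam. 0 < x)"

definition perimeter :: "nat list \<Rightarrow> nat" where
  "perimeter lam = hd lam + length lam - 1"

definition H :: "nat \<Rightarrow> nat list set" where
  "H n = {lam. is_partition lam \<and> perimeter lam = n}"

definition rep :: "nat list \<Rightarrow> nat" where
  "rep lam = card {i. i + 1 < length lam \<and> lam ! i = lam ! (i + 1)}"

definition even_parts :: "nat list \<Rightarrow> nat" where
  "even_parts lam = card {i. i < length lam \<and> even (lam ! i)}"

end

theory Submission
  imports Defs
begin

text \<open>For \<open>n \<ge> 1\<close>, every partition of perimeter \<open>n + 1\<close> arises in exactly one way from a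
  partition of perimeter \<open>n\<close>: by appending a part 1 if it ends in 1, and by adding 1 to every
  part otherwise. Appending 1 adds an odd part and creates a new repetition exactly when
  the old last part was 1; adding 1 everywhere keeps all repetitions and swaps odd and even parts.
  Hence the generating functions \<open>A\<^sub>n, B\<^sub>n\<close> of \<open>rep\<close> over partitions with last part 1, resp.
  larger than 1, and the generating functions \<open>O\<^sub>n, E\<^sub>n\<close> of odd, resp. even parts satisfy the
  same linear recurrence, with \<open>(O\<^sub>n, E\<^sub>n) = (A\<^sub>n\<^sub>+\<^sub>1, B\<^sub>n\<^sub>+\<^sub>1)\<close>. Therefore
  \<open>\<Sum> t\<^bsup>rep\<^esup> = A\<^sub>n + B\<^sub>n = B\<^sub>n\<^sub>+\<^sub>1 = E\<^sub>n\<close>.\<close>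

definition odd_parts :: "nat list \<Rightarrow> nat" where
  "odd_parts lam = card {i. i < length lam \<and> odd (lam ! i)}"

lemma even_parts_eq_length_filter: "even_parts xs = length (filter even xs)"
  unfolding even_parts_def by (simp add: length_filter_conv_card)

lemma odd_parts_eq_length_filter: "odd_parts xs = length (filter odd xs)"
  unfolding odd_parts_def by (simp add: length_filter_conv_card)

lemma even_parts_snoc: "even_parts (xs @ [x]) = even_parts xs + of_bool (even x)"
  by (simp add: even_parts_eq_length_filter)

lemma odd_parts_snoc: "odd_parts (xs @ [x]) = odd_parts xs + of_bool (odd x)"
  by (simp add: odd_parts_eq_length_filter)

lemma even_parts_map_Suc: "even_parts (map Suc xs) = odd_parts xs"
  by (simp add: even_parts_eq_length_filter odd_parts_eq_length_filter filter_map o_def)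

lemma odd_parts_map_Suc: "odd_parts (map Suc xs) = even_parts xs"
  by (simp add: even_parts_eq_length_filter odd_parts_eq_length_filter filter_map o_def)

lemma rep_eq_length_filter_zip: "rep xs = length (filter (\<lambda>(x, y). x = y) (zip xs (tl xs)))"
  unfolding rep_def length_filter_conv_card by (rule arg_cong[where f = card]) (auto simp: nth_tl)

lemma rep_map_inj: "inj f \<Longrightarrow> rep (map f xs) = rep xs"
  unfolding rep_def by (rule arg_cong[where f = card]) (auto simp: inj_eq)

lemma rep_snoc: "xs \<noteq> [] \<Longrightarrow> rep (xs @ [x]) = rep xs + of_bool (last xs = x)"
  by (induction xs rule: induct_list012) (simp_all add: rep_eq_length_filter_zip)

lemma is_partition_last_le:
  assumes "is_partition lam" "x \<in> set lam"
  shows "last lam \<le> x"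
proof -
  have split: "lam = butlast lam @ [last lam]"
    using assms(1) by (simp add: is_partition_def)
  then have "sorted_wrt (\<ge>) (butlast lam @ [last lam])"
    using assms(1) by (simp add: is_partition_def)
  then have "\<forall>y\<in>set (butlast lam). last lam \<le> y"
    by (simp add: sorted_wrt_append)
  moreover have "x \<in> set (butlast lam) \<or> x = last lam"
    using assms(2) by (subst (asm) split) auto
  ultimately show ?thesis by auto
qed

lemma is_partition_snoc_one:
  "lam \<noteq> [] \<Longrightarrow> is_partition (lam @ [1]) \<longleftrightarrow> is_partition lam"
  by (auto simp: is_partition_def sorted_wrt_append)

lemma is_partition_map_Suc: "is_partition lam \<Longrightarrow> is_partition (map Suc lam)"
  by (simp add: is_partition_def sorted_wrt_map)

lemma perimeter_snoc: "lam \<noteq> [] \<Longrightarrow> perimeter (lam @ [x]) = Suc (perimeter lam)"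
  by (simp add: perimeter_def)

lemma perimeter_map_Suc: "lam \<noteq> [] \<Longrightarrow> perimeter (map Suc lam) = Suc (perimeter lam)"
  by (cases lam) (simp_all add: perimeter_def)

lemma finite_H: "finite (H n)"
proof (rule finite_subset)
  show "H n \<subseteq> {lam. set lam \<subseteq> {..n} \<and> length lam \<le> n}"
  proof
    fix lam assume "lam \<in> H n"
    then have part: "is_partition lam" and per: "hd lam + length lam - 1 = n"
      by (simp_all add: H_def perimeter_def)
    then have "0 < hd lam" "0 < length lam"
      by (simp_all add: is_partition_def)
    with per have "length lam \<le> n" "hd lam \<le> n"
      by linarith+
    moreover have "x \<le> hd lam" if "x \<in> set lam" for x
      using part that by (cases lam) (auto simp: is_partition_def)
    ultimately show "lam \<in> {lam. set lam \<subseteq> {..n} \<and> length lam \<le> n}"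
      by fastforce
  qed
qed (simp add: finite_lists_length_le)

lemma Nil_notin_H: "[] \<notin> H n"
  by (simp add: H_def is_partition_def)

lemma H_one: "H 1 = {[1]}"
proof safe
  fix lam assume "lam \<in> H 1"
  then obtain x xs where "lam = x # xs" "0 < x" "x + length xs = 1"
    by (cases lam) (auto simp: H_def is_partition_def perimeter_def)
  then show "lam = [1]" by (cases xs) simp_all
qed (simp add: H_def is_partition_def perimeter_def)

lemma H_Suc_last_one:
  assumes "0 < n"
  shows "{lam \<in> H (Suc n). last lam = 1} = (\<lambda>lam. lam @ [1]) ` H n"
proof safe
  fix lam assume lam: "lam \<in> H (Suc n)" "last lam = 1"
  have part: "is_partition lam" and per: "perimeter lam = Suc n"
    using lam(1) by (simp_all add: H_def)
  from lam(1) have "lam \<noteq> []"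
    by (metis Nil_notin_H)
  then have lam_eq: "lam = butlast lam @ [1]"
    using lam(2) by (metis append_butlast_last_id)
  have "butlast lam \<noteq> []"
  proof
    assume "butlast lam = []"
    with lam_eq have "lam = [1]" by simp
    with per assms show False by (simp add: perimeter_def)
  qed
  with part per lam_eq have "butlast lam \<in> H n"
    using is_partition_snoc_one[of "butlast lam"] perimeter_snoc[of "butlast lam" 1]
    by (simp add: H_def)
  with lam_eq show "lam \<in> (\<lambda>lam. lam @ [1]) ` H n" by blast
next
  fix lam assume "lam \<in> H n"
  moreover from this have "lam \<noteq> []"
    by (metis Nil_notin_H)
  ultimately show "lam @ [1] \<in> H (Suc n)"
    using is_partition_snoc_one[of lam] perimeter_snoc[of lam 1] by (simp add: H_def)
qed simp

lemma H_Suc_last_neq_one: "{lam \<in> H (Suc n). last lam \<noteq> 1} = map Suc ` H n"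
proof safe
  fix lam assume lam: "lam \<in> H (Suc n)" "last lam \<noteq> 1"
  then have part: "is_partition lam" and per: "perimeter lam = Suc n"
    by (simp_all add: H_def)
  have ge2: "2 \<le> x" if "x \<in> set lam" for x
  proof -
    have "last lam \<in> set lam"
      using part by (simp add: is_partition_def)
    then have "0 < last lam"
      using part by (simp add: is_partition_def)
    with lam(2) have "2 \<le> last lam" by simp
    with is_partition_last_le[OF part that] show ?thesis by simp
  qed
  define pred_lam where "pred_lam = map (\<lambda>x. x - 1) lam"
  have lam_eq: "lam = map Suc pred_lam"
    unfolding pred_lam_def map_map using ge2 by (intro map_idI[symmetric]) fastforce
  have "is_partition pred_lam"
    using part unfolding pred_lam_def is_partition_def
    by (auto simp: sorted_wrt_map elim: sorted_wrt_mono_rel[rotated] dest: ge2)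
  moreover from this have "perimeter pred_lam = n"
    using per lam_eq perimeter_map_Suc[of pred_lam] by (simp add: is_partition_def)
  ultimately show "lam \<in> map Suc ` H n"
    using lam_eq by (simp add: H_def)
next
  fix lam assume "lam \<in> H n"
  then have part: "is_partition lam" and per: "perimeter lam = n"
    by (simp_all add: H_def)
  moreover from \<open>lam \<in> H n\<close> have "lam \<noteq> []"
    by (metis Nil_notin_H)
  ultimately show "map Suc lam \<in> H (Suc n)"
    by (simp add: H_def is_partition_map_Suc perimeter_map_Suc)
  show "last (map Suc lam) = 1 \<Longrightarrow> False"
    using part \<open>lam \<noteq> []\<close> last_in_set[of lam] by (auto simp: is_partition_def last_map)
qed

lemma sum_H_split_last:
  "(\<Sum>lam\<in>H n. f lam) =
     (\<Sum>lam\<in>{lam \<in> H n. last lam = 1}. f lam) + (\<Sum>lam\<in>{lam \<in> H n. last lam \<noteq> 1}. f lam)"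
  using sum.Int_Diff[OF finite_H, of f n "{lam. last lam = 1}"] by (simp add: Int_def set_diff_eq)

lemma sum_H_Suc:
  assumes "0 < n"
  shows "(\<Sum>lam\<in>H (Suc n). f lam) = (\<Sum>lam\<in>H n. f (lam @ [1])) + (\<Sum>lam\<in>H n. f (map Suc lam))"
  unfolding sum_H_split_last[where n = "Suc n"] H_Suc_last_one[OF assms] H_Suc_last_neq_one
  by (simp add: sum.reindex inj_on_def)

definition rep_gf_last_one :: "nat \<Rightarrow> int poly" where
  "rep_gf_last_one n = (\<Sum>lam\<in>{lam \<in> H n. last lam = 1}. monom 1 (rep lam))"

definition rep_gf_last_neq_one :: "nat \<Rightarrow> int poly" where
  "rep_gf_last_neq_one n = (\<Sum>lam\<in>{lam \<in> H n. last lam \<noteq> 1}. monom 1 (rep lam))"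

definition odd_parts_gf :: "nat \<Rightarrow> int poly" where
  "odd_parts_gf n = (\<Sum>lam\<in>H n. monom 1 (odd_parts lam))"

definition even_parts_gf :: "nat \<Rightarrow> int poly" where
  "even_parts_gf n = (\<Sum>lam\<in>H n. monom 1 (even_parts lam))"

lemma rep_gf_last_one_Suc:
  assumes "0 < n"
  shows "rep_gf_last_one (Suc n) = monom 1 1 * rep_gf_last_one n + rep_gf_last_neq_one n"
proof -
  have "rep_gf_last_one (Suc n) = (\<Sum>lam\<in>H n. monom 1 (rep (lam @ [1])))"
    unfolding rep_gf_last_one_def H_Suc_last_one[OF assms] by (simp add: sum.reindex inj_on_def)
  also have "\<dots> = (\<Sum>lam\<in>H n. monom 1 (rep lam + of_bool (last lam = 1)))"
    by (intro sum.cong refl) (metis Nil_notin_H rep_snoc)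
  also have "\<dots> = (\<Sum>lam\<in>{lam \<in> H n. last lam = 1}. monom 1 1 * monom 1 (rep lam))
      + (\<Sum>lam\<in>{lam \<in> H n. last lam \<noteq> 1}. monom 1 (rep lam))"
    by (subst sum_H_split_last) (simp add: mult_monom)
  finally show ?thesis
    by (simp add: rep_gf_last_one_def rep_gf_last_neq_one_def sum_distrib_left)
qed

lemma rep_gf_last_neq_one_Suc:
  "rep_gf_last_neq_one (Suc n) = rep_gf_last_one n + rep_gf_last_neq_one n"
proof -
  have "rep_gf_last_neq_one (Suc n) = (\<Sum>lam\<in>H n. monom 1 (rep (map Suc lam)))"
    unfolding rep_gf_last_neq_one_def H_Suc_last_neq_one by (simp add: sum.reindex inj_on_def)
  also have "\<dots> = (\<Sum>lam\<in>H n. monom 1 (rep lam))"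
    by (simp add: rep_map_inj)
  finally show ?thesis
    unfolding rep_gf_last_one_def rep_gf_last_neq_one_def by (simp only: sum_H_split_last)
qed

lemma odd_parts_gf_Suc:
  "0 < n \<Longrightarrow> odd_parts_gf (Suc n) = monom 1 1 * odd_parts_gf n + even_parts_gf n"
  unfolding odd_parts_gf_def even_parts_gf_def
  by (simp add: sum_H_Suc odd_parts_snoc odd_parts_map_Suc mult_monom sum_distrib_left)

lemma even_parts_gf_Suc:
  "0 < n \<Longrightarrow> even_parts_gf (Suc n) = odd_parts_gf n + even_parts_gf n"
  unfolding odd_parts_gf_def even_parts_gf_def
  by (simp add: sum_H_Suc even_parts_snoc even_parts_map_Suc)

text \<open>Both pairs obey the recurrence \<open>(X, Y) \<mapsto> (t X + Y, X + Y)\<close>, and the base values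
  \<open>(t, 1)\<close> of the parity pair are those of the repetition pair at perimeter 2.\<close>
lemma parts_gf_eq_rep_gf_Suc:
  "0 < n \<Longrightarrow> odd_parts_gf n = rep_gf_last_one (Suc n) \<and> even_parts_gf n = rep_gf_last_neq_one (Suc n)"
proof (induction n rule: nat_induct_non_zero)
  case 1
  have "rep_gf_last_one 1 = 1" "rep_gf_last_neq_one 1 = 0"
    unfolding rep_gf_last_one_def rep_gf_last_neq_one_def H_one
    by (simp_all add: rep_def Collect_conv_if)
  moreover have "odd_parts_gf 1 = monom 1 1" "even_parts_gf 1 = 1"
    unfolding odd_parts_gf_def even_parts_gf_def H_one
    by (simp_all add: odd_parts_eq_length_filter even_parts_eq_length_filter)
  ultimately show ?case
    by (simp add: rep_gf_last_one_Suc rep_gf_last_neq_one_Suc)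
next
  case (Suc n)
  then show ?case
    by (simp add: odd_parts_gf_Suc even_parts_gf_Suc rep_gf_last_one_Suc rep_gf_last_neq_one_Suc)
qed

theorem theorem1p3:
  fixes n :: nat
  assumes "0 < n"
  shows "(\<Sum>lam\<in>H n. monom (1::int) (rep lam)) = (\<Sum>lam\<in>H n. monom (1::int) (even_parts lam))"
proof -
  have "(\<Sum>lam\<in>H n. monom (1::int) (rep lam)) = rep_gf_last_one n + rep_gf_last_neq_one n"
    unfolding rep_gf_last_one_def rep_gf_last_neq_one_def by (rule sum_H_split_last)
  also have "\<dots> = rep_gf_last_neq_one (Suc n)"
    by (simp add: rep_gf_last_neq_one_Suc)
  also have "\<dots> = even_parts_gf n"
    using parts_gf_eq_rep_gf_Suc[OF assms] by simp
  finally show ?thesis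
    by (simp add: even_parts_gf_def)
qed

end
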